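(* Let $w:2^{[m]}\to\mathbb{R}_{\ge0}$ be additive, and let $\mathcal P=(P_1,\dots,P_n)$ and $\mathcal Q=(Q_1,\dots,Q_n)$ be two $n$-partitions of $[m]$ that are both $\mathrm{EF1}$ with respect to $w$. Then the sequence $(w(P_i))_{i=1}^n$ $\tfrac12$-majorizes the sequence $(w(Q_i))_{i=1}^n$.
   Context: $w$ additive means $w(S)=\sum_{g\in S}w(g)$. An $n$-partition $(S_1,\dots,S_n)$ of $[m]$ (parts may be empty) is $\mathrm{EF1}$ with respect to $w$ if for all $i,j\in[n]$ with $S_j\ne\emptyset$ there is $g\in S_j$ with $w(S_i)\ge w(S_j)-w(g)$. For $\beta\in\mathbb{R}_{\ge0}$, a sequence $(x_i)_{i=1}^n$ $\beta$-majorizes $(y_i)_{i=1}^n$ if $\sum_{i=1}^k x_{(i)}\ge\beta\sum_{i=1}^k y_{(i)}$ for all $1\le k\le n-1$ and $\sum_{i=1}^n x_i=\sum_{i=1}^n y_i$, where $x_{(i)}$, $y_{(i)}$ denote the $i$-th largest entries. *)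

theory Defs
  imports Complex_Main
begin

text \<open>Goods are [m] = {1..m}. A valuation w is given by nonnegative item weights;
  the additive set function is w(S) = sum w S. Parts of an n-partition are indexed by 0..<n.\<close>

definition add_val :: "(nat \<Rightarrow> real) \<Rightarrow> nat set \<Rightarrow> real" where
  "add_val w S = (\<Sum>g\<in>S. w g)"

definition is_partition :: "nat \<Rightarrow> nat \<Rightarrow> (nat \<Rightarrow> nat set) \<Rightarrow> bool" where
  "is_partition n m P \<longleftrightarrow>
     (\<Union>i\<in>{0..<n}. P i) = {1..m} \<and>
     (\<forall>i<n. \<forall>j<n. i \<noteq> j \<longrightarrow> P i \<inter> P j = {})"

definition EF1 :: "(nat \<Rightarrow> real) \<Rightarrow> nat \<Rightarrow> (nat \<Rightarrow> nat set) \<Rightarrow> bool" where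
  "EF1 w n P \<longleftrightarrow>
     (\<forall>i<n. \<forall>j<n. P j \<noteq> {} \<longrightarrow>
        (\<exists>g\<in>P j. add_val w (P i) \<ge> add_val w (P j) - w g))"

text \<open>The i-th largest entry of xs is (rev (sort xs)) ! (i-1).\<close>
definition sorted_desc :: "real list \<Rightarrow> real list" where
  "sorted_desc xs = rev (sort xs)"

definition beta_majorizes :: "real \<Rightarrow> real list \<Rightarrow> real list \<Rightarrow> bool" where
  "beta_majorizes \<beta> xs ys \<longleftrightarrow>
     length xs = length ys \<and>
     (\<forall>k. 1 \<le> k \<and> k \<le> length xs - 1 \<longrightarrow>
        sum_list (take k (sorted_desc xs)) \<ge> \<beta> * sum_list (take k (sorted_desc ys))) \<and>
     sum_list xs = sum_list ys"

end

theory Submission imports Defs "HOL-Combinatorics.Permutations" begin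

text \<open>Let \<open>b\<^sub>t\<close> be the smallest value of a bundle of \<open>Q\<close>. By EF1, each of the \<open>k\<close> largest
  bundles of \<open>Q\<close> exceeds \<open>b\<^sub>t\<close> by at most the value of one of its goods, so their total is at most
  \<open>k b\<^sub>t\<close> plus the value of a set \<open>X\<close> of at most \<open>k\<close> goods. Now \<open>k b\<^sub>t\<close> is at most \<open>k/n\<close> times the
  total value, hence at most the sum of the \<open>k\<close> largest bundles of \<open>P\<close>; and \<open>X\<close> meets at most \<open>k\<close>
  bundles of \<open>P\<close>, so \<open>w(X)\<close> is bounded by the same quantity.\<close>

definition top_sum :: "nat \<Rightarrow> (nat \<Rightarrow> real) \<Rightarrow> nat \<Rightarrow> real" where
  "top_sum k f n = sum_list (take k (sorted_desc (map f [0..<n])))"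

lemma nth_sorted_desc_antimono:
  assumes "i \<le> j" "j < length xs"
  shows "sorted_desc xs ! j \<le> sorted_desc xs ! i"
proof -
  have "sorted_desc xs ! i = sort xs ! (length xs - Suc i)"
    and "sorted_desc xs ! j = sort xs ! (length xs - Suc j)"
    using assms by (auto simp: sorted_desc_def rev_nth)
  moreover have "sort xs ! (length xs - Suc j) \<le> sort xs ! (length xs - Suc i)"
    using assms by (intro sorted_nth_mono) auto
  ultimately show ?thesis by simp
qed

lemma top_sum_eq_sum_dominant_set:
  assumes "k \<le> n"
  obtains T where "T \<subseteq> {0..<n}" "card T = k" "top_sum k f n = sum f T"
    "\<And>i j. i \<in> T \<Longrightarrow> j \<in> {0..<n} - T \<Longrightarrow> f j \<le> f i"
proof -
  define xs where "xs = map f [0..<n]"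
  have len: "length xs = n" by (simp add: xs_def)
  have "mset (sorted_desc xs) = mset xs" by (simp add: sorted_desc_def)
  then obtain p where p0: "p permutes {..<length xs}" and perm: "permute_list p xs = sorted_desc xs"
    using mset_eq_permutation by metis
  have p: "p permutes {..<n}" using p0 len by simp
  have nth_desc: "sorted_desc xs ! i = f (p i)" if "i < n" for i
  proof -
    have "sorted_desc xs ! i = xs ! p i"
      using permute_list_nth[OF p0] perm that len by metis
    moreover have "p i < n" using permutes_in_image[OF p] that by simp
    ultimately show ?thesis by (simp add: xs_def)
  qed
  have inj: "inj_on p {0..<k}"
    using permutes_inj[OF p] by (auto intro: inj_on_subset)
  define T where "T = p ` {0..<k}"
  show thesis
  proof
    have "p ` {0..<k} \<subseteq> p ` {..<n}"
      using assms by (intro image_mono) auto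
    then show "T \<subseteq> {0..<n}"
      by (simp only: T_def permutes_image[OF p]) auto
    show "card T = k"
      using card_image[OF inj] by (simp add: T_def)
    have "take k (sorted_desc xs) = map (\<lambda>i. f (p i)) [0..<k]"
      using assms nth_desc len by (intro nth_equalityI) (auto simp: sorted_desc_def)
    then have "top_sum k f n = (\<Sum>i = 0..<k. f (p i))"
      by (simp add: top_sum_def xs_def flip: sum_set_upt_conv_sum_list_nat)
    then show "top_sum k f n = sum f T"
      by (simp add: T_def sum.reindex[OF inj])
  next
    fix i j assume i: "i \<in> T" and j: "j \<in> {0..<n} - T"
    obtain i' where i': "i' < k" "i = p i'" using i by (auto simp: T_def)
    have "j \<in> p ` {..<n}"
      using j by (simp add: permutes_image[OF p])
    then obtain j' where j': "j' < n" "j = p j'" by auto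
    have "k \<le> j'"
      using j j' by (auto simp: T_def)
    then have "sorted_desc xs ! j' \<le> sorted_desc xs ! i'"
      using i' j' len by (intro nth_sorted_desc_antimono) auto
    then show "f j \<le> f i"
      using nth_desc i' j' assms by simp
  qed
qed

text \<open>An exchange argument: every element of \<open>S - T\<close> is dominated by every element of \<open>T - S\<close>,
  and the latter set is at least as large.\<close>

lemma sum_le_sum_dominant_set:
  fixes f :: "nat \<Rightarrow> real"
  assumes T: "T \<subseteq> {0..<n}" and S: "S \<subseteq> {0..<n}" and card_le: "card S \<le> card T"
    and nonneg: "\<And>i. i \<in> T \<Longrightarrow> f i \<ge> 0"
    and dom: "\<And>i j. i \<in> T \<Longrightarrow> j \<in> {0..<n} - T \<Longrightarrow> f j \<le> f i"
  shows "sum f S \<le> sum f T"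
proof -
  define A where "A = S - T"
  define B where "B = T - S"
  have fin: "finite S" "finite T" "finite A" "finite B"
    using finite_subset[OF T] finite_subset[OF S] by (auto simp: A_def B_def)
  have "card (S \<inter> T) + card A \<le> card (S \<inter> T) + card B"
    using card_le card_Int_Diff[OF fin(1), of T] card_Int_Diff[OF fin(2), of S]
    by (simp add: A_def B_def Int_commute)
  then have card_AB: "card A \<le> card B" by simp
  have "sum f A \<le> sum f B"
  proof (cases "B = {}")
    case True
    then show ?thesis using card_AB fin by simp
  next
    case False
    define c where "c = Min (f ` B)"
    have "c \<in> f ` B"
      using False fin(4) by (simp add: c_def)
    then obtain b where b: "b \<in> B" "f b = c" by blast
    have "f a \<le> c" if "a \<in> A" for a
      using that b dom S by (auto simp: A_def B_def)
    then have "sum f A \<le> of_nat (card A) * c"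
      using sum_bounded_above[of A f c] by blast
    also have "\<dots> \<le> of_nat (card B) * c"
      using card_AB nonneg b by (intro mult_right_mono) (auto simp: B_def)
    also have "\<dots> \<le> sum f B"
      using sum_bounded_below[of B c f] fin(4) by (simp add: c_def)
    finally show ?thesis .
  qed
  then show ?thesis
    using sum.Int_Diff[OF fin(1), of f T] sum.Int_Diff[OF fin(2), of f S]
    by (simp add: A_def B_def Int_commute)
qed

lemma sum_le_top_sum:
  fixes f :: "nat \<Rightarrow> real"
  assumes "S \<subseteq> {0..<n}" "card S \<le> k" "k \<le> n" "\<And>i. i < n \<Longrightarrow> f i \<ge> 0"
  shows "sum f S \<le> top_sum k f n"
proof -
  obtain T where T: "T \<subseteq> {0..<n}" "card T = k" "top_sum k f n = sum f T"
    and dom: "\<And>i j. i \<in> T \<Longrightarrow> j \<in> {0..<n} - T \<Longrightarrow> f j \<le> f i"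
    using top_sum_eq_sum_dominant_set[OF \<open>k \<le> n\<close>] by blast
  have "f i \<ge> 0" if "i \<in> T" for i
    using that T(1) assms(4) by auto
  then have "sum f S \<le> sum f T"
    using sum_le_sum_dominant_set[OF T(1) assms(1) _ _ dom] T(2) assms(2) by simp
  with T(3) show ?thesis by simp
qed

text \<open>Each of the \<open>k\<close> selected entries dominates each of the \<open>n - k\<close> others, so the selected
  ones have at least the average value.\<close>

lemma mean_le_top_sum:
  fixes f :: "nat \<Rightarrow> real"
  assumes "k \<le> n"
  shows "real k * sum f {0..<n} \<le> real n * top_sum k f n"
proof -
  obtain T where T: "T \<subseteq> {0..<n}" "card T = k" "top_sum k f n = sum f T"
    and dom: "\<And>i j. i \<in> T \<Longrightarrow> j \<in> {0..<n} - T \<Longrightarrow> f j \<le> f i"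
    using top_sum_eq_sum_dominant_set[OF assms] by blast
  define C where "C = {0..<n} - T"
  have card_C: "card C = n - k"
    using card_Diff_subset[OF finite_subset[OF T(1)] T(1)] T(2) by (simp add: C_def)
  have "real k * sum f C = (\<Sum>j\<in>C. \<Sum>i\<in>T. f j)"
    using T by (simp add: sum_distrib_left mult.commute)
  also have "\<dots> \<le> (\<Sum>j\<in>C. \<Sum>i\<in>T. f i)"
    using dom by (intro sum_mono) (auto simp: C_def)
  also have "\<dots> = real (n - k) * sum f T"
    using card_C by simp
  finally have "real k * sum f C \<le> real (n - k) * sum f T" .
  moreover have "sum f {0..<n} = sum f T + sum f C"
    using sum.subset_diff[OF T(1), of f] by (simp add: C_def)
  moreover have "real n * sum f T = real k * sum f T + real (n - k) * sum f T"
    using assms by (simp add: of_nat_diff algebra_simps)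
  ultimately show ?thesis
    using T(3) by (simp add: distrib_left)
qed

lemma partition_part_subset:
  "is_partition n m P \<Longrightarrow> i < n \<Longrightarrow> P i \<subseteq> {1..m}"
  unfolding is_partition_def by auto

lemma partition_parts_disjoint:
  "is_partition n m P \<Longrightarrow> i < n \<Longrightarrow> j < n \<Longrightarrow> i \<noteq> j \<Longrightarrow> P i \<inter> P j = {}"
  unfolding is_partition_def by auto

lemma add_val_nonneg:
  "(\<And>g. g \<in> S \<Longrightarrow> w g \<ge> 0) \<Longrightarrow> add_val w S \<ge> 0"
  unfolding add_val_def by (rule sum_nonneg)

lemma finite_partition_part:
  "is_partition n m P \<Longrightarrow> i < n \<Longrightarrow> finite (P i)"
  by (rule finite_subset[OF partition_part_subset]) auto

lemma add_val_partition_UNION: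
  assumes P: "is_partition n m P" and R: "R \<subseteq> {0..<n}"
  shows "add_val w (\<Union>i\<in>R. P i) = (\<Sum>i\<in>R. add_val w (P i))"
  unfolding add_val_def
proof (rule sum.UNION_disjoint)
  show "finite R" using finite_subset[OF R] by simp
  show "\<forall>i\<in>R. finite (P i)"
    using R finite_partition_part[OF P] by auto
  show "\<forall>i\<in>R. \<forall>j\<in>R. i \<noteq> j \<longrightarrow> P i \<inter> P j = {}"
    using R by (intro ballI impI partition_parts_disjoint[OF P]) auto
qed

lemma sum_add_val_partition:
  assumes "is_partition n m P"
  shows "(\<Sum>i<n. add_val w (P i)) = add_val w {1..m}"
proof -
  have "(\<Union>i\<in>{0..<n}. P i) = {1..m}" using assms by (simp add: is_partition_def)
  then show ?thesis
    using add_val_partition_UNION[OF assms, of "{0..<n}" w] by (simp add: lessThan_atLeast0)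
qed

lemma add_val_le_sum_covering_parts:
  assumes P: "is_partition n m P" and X: "X \<subseteq> {1..m}"
    and nonneg: "\<And>g. g \<in> {1..m} \<Longrightarrow> w g \<ge> 0"
  obtains R where "R \<subseteq> {0..<n}" "card R \<le> card X" "add_val w X \<le> (\<Sum>i\<in>R. add_val w (P i))"
proof -
  have "X \<subseteq> (\<Union>j\<in>{0..<n}. P j)"
    using P X by (simp add: is_partition_def)
  then have "\<forall>x\<in>X. \<exists>j. j < n \<and> x \<in> P j"
    by fastforce
  then obtain part where part: "\<And>x. x \<in> X \<Longrightarrow> part x < n \<and> x \<in> P (part x)"
    by metis
  define R where "R = part ` X"
  have R: "R \<subseteq> {0..<n}" using part by (auto simp: R_def)
  have "add_val w X \<le> add_val w (\<Union>i\<in>R. P i)"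
    unfolding add_val_def
  proof (rule sum_mono2)
    show "finite (\<Union>i\<in>R. P i)"
      using finite_subset[OF R] R finite_partition_part[OF P] by auto
    show "X \<subseteq> (\<Union>i\<in>R. P i)" using part by (auto simp: R_def)
    show "0 \<le> w g" if g: "g \<in> (\<Union>i\<in>R. P i) - X" for g
    proof -
      obtain i where i: "i \<in> R" "g \<in> P i" using g by blast
      then have "i < n" using R by auto
      then have "g \<in> {1..m}" using partition_part_subset[OF P] i(2) by blast
      then show ?thesis by (rule nonneg)
    qed
  qed
  moreover have "card R \<le> card X"
    unfolding R_def using card_image_le finite_subset[OF X] by blast
  ultimately show thesis
    using that[OF R] add_val_partition_UNION[OF P R] by simp
qed

text \<open>Empty bundles contribute no good to \<open>X\<close>: their value \<open>0\<close> is already at most that of \<open>Q t\<close>.\<close>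

lemma EF1_sum_le:
  assumes Q: "is_partition n m Q" and EF1: "EF1 w n Q"
    and nonneg: "\<And>g. g \<in> {1..m} \<Longrightarrow> w g \<ge> 0"
    and I: "I \<subseteq> {0..<n}" and t: "t < n"
  obtains X where "X \<subseteq> {1..m}" "card X \<le> card I"
    "(\<Sum>i\<in>I. add_val w (Q i)) \<le> real (card I) * add_val w (Q t) + add_val w X"
proof -
  define b where "b i = add_val w (Q i)" for i
  define I' where "I' = {i \<in> I. Q i \<noteq> {}}"
  have fin: "finite I" "finite I'" "I' \<subseteq> I"
    using finite_subset[OF I] by (auto simp: I'_def)
  have "\<exists>g\<in>Q i. b t \<ge> b i - w g" if "i \<in> I'" for i
  proof -
    have "i < n" "Q i \<noteq> {}" using that I by (auto simp: I'_def)
    then show ?thesis using EF1 t unfolding EF1_def b_def by blast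
  qed
  then obtain good where good: "\<And>i. i \<in> I' \<Longrightarrow> good i \<in> Q i \<and> b t \<ge> b i - w (good i)"
    by metis
  have inj: "inj_on good I'"
  proof (rule inj_onI)
    fix i j assume "i \<in> I'" "j \<in> I'" "good i = good j"
    then have "good i \<in> Q i \<inter> Q j"
      using good[of i] good[of j] by simp
    moreover have "i < n" "j < n"
      using \<open>i \<in> I'\<close> \<open>j \<in> I'\<close> I by (auto simp: I'_def)
    ultimately show "i = j"
      using partition_parts_disjoint[OF Q, of i j] by blast
  qed
  have b_nonneg: "b t \<ge> 0"
    using t nonneg partition_part_subset[OF Q t] by (auto simp: b_def intro!: add_val_nonneg)
  have "sum b I = sum b I'"
    using fin by (intro sum.mono_neutral_right) (auto simp: I'_def b_def add_val_def)
  also have "\<dots> \<le> (\<Sum>i\<in>I'. b t + w (good i))"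
    using good by (intro sum_mono) (simp add: algebra_simps)
  also have "\<dots> = real (card I') * b t + add_val w (good ` I')"
    by (simp add: sum.distrib add_val_def sum.reindex[OF inj])
  also have "\<dots> \<le> real (card I) * b t + add_val w (good ` I')"
    using card_mono[OF fin(1,3)] b_nonneg by (simp add: mult_right_mono)
  finally have "sum b I \<le> real (card I) * b t + add_val w (good ` I')" .
  moreover have "good ` I' \<subseteq> {1..m}"
  proof
    fix x assume "x \<in> good ` I'"
    then obtain i where "i \<in> I'" "x = good i" by blast
    then have "i < n" "x \<in> Q i" using good I by (auto simp: I'_def)
    then show "x \<in> {1..m}" using partition_part_subset[OF Q] by blast
  qed
  moreover have "card (good ` I') \<le> card I"
    using card_image[OF inj] card_mono[OF fin(1,3)] by simp
  ultimately show thesis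
    using that by (simp add: b_def)
qed

lemma top_sum_EF1_le_twice_top_sum:
  assumes nonneg: "\<And>g. g \<in> {1..m} \<Longrightarrow> w g \<ge> 0"
    and P: "is_partition n m P" and Q: "is_partition n m Q" and Q_EF1: "EF1 w n Q"
    and "k \<le> n"
  shows "top_sum k (\<lambda>i. add_val w (Q i)) n \<le> 2 * top_sum k (\<lambda>i. add_val w (P i)) n"
proof (cases "n = 0")
  case True
  then show ?thesis by (simp add: top_sum_def sorted_desc_def)
next
  case False
  define a where "a = (\<lambda>i. add_val w (P i))"
  define b where "b = (\<lambda>i. add_val w (Q i))"
  have a_nonneg: "a i \<ge> 0" if "i < n" for i
    using nonneg partition_part_subset[OF P that] by (auto simp: a_def intro!: add_val_nonneg)
  have "Min (b ` {0..<n}) \<in> b ` {0..<n}"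
    using False by simp
  then obtain t where t: "t < n" and "b t = Min (b ` {0..<n})"
    by auto
  then have t_min: "b t \<le> b i" if "i < n" for i
    using that by simp
  obtain TQ where TQ: "TQ \<subseteq> {0..<n}" "card TQ = k" "top_sum k b n = sum b TQ"
    using top_sum_eq_sum_dominant_set[OF \<open>k \<le> n\<close>] by blast
  obtain X where X: "X \<subseteq> {1..m}" "card X \<le> k" "sum b TQ \<le> real k * b t + add_val w X"
    using EF1_sum_le[OF Q Q_EF1 nonneg TQ(1) t] TQ(2) unfolding b_def by blast
  have "real n * b t \<le> sum b {0..<n}"
    using sum_bounded_below[of "{0..<n}" "b t" b] t_min by simp
  also have "\<dots> = sum a {0..<n}"
    using sum_add_val_partition[OF P] sum_add_val_partition[OF Q]
    by (simp add: a_def b_def lessThan_atLeast0)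
  finally have "real n * (real k * b t) \<le> real k * sum a {0..<n}"
    by (simp add: mult.left_commute mult_left_mono)
  also have "\<dots> \<le> real n * top_sum k a n"
    using mean_le_top_sum[OF \<open>k \<le> n\<close>] .
  finally have bt_le: "real k * b t \<le> top_sum k a n"
    using False by (simp add: mult_le_cancel_left_pos)
  obtain R where R: "R \<subseteq> {0..<n}" "card R \<le> card X"
    and "add_val w X \<le> (\<Sum>i\<in>R. add_val w (P i))"
    by (rule add_val_le_sum_covering_parts[OF P X(1) nonneg])
  then have "add_val w X \<le> sum a R"
    by (simp add: a_def)
  also have "\<dots> \<le> top_sum k a n"
    using R X(2) \<open>k \<le> n\<close> a_nonneg by (intro sum_le_top_sum) auto
  finally have "top_sum k b n \<le> 2 * top_sum k a n"
    using bt_le TQ(3) X(3) by linarith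
  then show ?thesis
    by (simp only: a_def b_def)
qed

theorem lemma2:
  fixes w :: "nat \<Rightarrow> real" and n m :: nat and P Q :: "nat \<Rightarrow> nat set"
  assumes w_nonneg: "\<And>g. g \<in> {1..m} \<Longrightarrow> w g \<ge> 0"
    and P_part: "is_partition n m P" and Q_part: "is_partition n m Q"
    and P_EF1: "EF1 w n P" and Q_EF1: "EF1 w n Q"
  shows "beta_majorizes (1/2)
           (map (\<lambda>i. add_val w (P i)) [0..<n])
           (map (\<lambda>i. add_val w (Q i)) [0..<n])"
proof -
  have "sum_list (map (\<lambda>i. add_val w (P i)) [0..<n]) = sum_list (map (\<lambda>i. add_val w (Q i)) [0..<n])"
    using sum_add_val_partition[OF P_part] sum_add_val_partition[OF Q_part]
    by (simp add: sum_list_distinct_conv_sum_set lessThan_atLeast0 flip: atLeastLessThan_upt)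
  moreover have "1/2 * top_sum k (\<lambda>i. add_val w (Q i)) n \<le> top_sum k (\<lambda>i. add_val w (P i)) n"
    if "k \<le> n - 1" for k
    using top_sum_EF1_le_twice_top_sum[OF w_nonneg P_part Q_part Q_EF1, of k] that by linarith
  ultimately show ?thesis
    by (auto simp: beta_majorizes_def top_sum_def)
qed

end
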